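(* Let $k\ge2$, $a>0$, $0<\theta<1$, $\lambda=a^k$, and $\gamma(u)=a(1+\theta)-u+\frac{u-a\theta}{1+u^k}$. Then $\gamma$ maps $[a\theta,a]$ into itself and has a unique fixed point $\xi\in(a\theta,a)$. Moreover $\gamma'(\xi)<-1$ holds if and only if $\theta<\frac{k-1}{k+1}$ and $\lambda>\frac{1}{k-1-(k+1)\theta}\bigl(\frac{k+1}{k}\bigr)^k$. *)

theory Defs
  imports "HOL-Analysis.Analysis"
begin

definition gam :: "nat \<Rightarrow> real \<Rightarrow> real \<Rightarrow> real \<Rightarrow> real" where
  "gam k a \<theta> u = a * (1 + \<theta>) - u + (u - a * \<theta>) / (1 + u ^ k)"

end

theory Submission
  imports Defs
begin

text \<open>
  The map \<open>u \<mapsto> \<gamma>(u) - u\<close> is strictly decreasing on \<open>[a\<theta>, \<infinity>)\<close>, positive at \<open>a\<theta>\<close> and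
  negative at \<open>a\<close>, which gives the unique fixed point \<open>\<xi>\<close>. At \<open>\<xi>\<close> the fixed point equation
  lets one eliminate \<open>a\<close> from \<open>\<gamma>'(\<xi>)\<close>: with \<open>c = k - 1 - (k + 1)\<theta>\<close> one gets
  \<open>\<gamma>'(\<xi>) < -1 \<longleftrightarrow> c \<xi>\<^sup>k > 1\<close>. Conversely \<open>a = \<phi>(\<xi>)\<close> for the increasing function
  \<open>\<phi>(x) = x (1 + 2x\<^sup>k) / (1 + (1 + \<theta>) x\<^sup>k)\<close>, so for \<open>c > 0\<close> the condition
  \<open>\<xi> > c\<^sup>-\<^sup>1\<^sup>/\<^sup>k\<close> becomes \<open>a > \<phi>(c\<^sup>-\<^sup>1\<^sup>/\<^sup>k) = c\<^sup>-\<^sup>1\<^sup>/\<^sup>k (k + 1) / k\<close>.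
\<close>

lemma power_less_power_iff_base:
  fixes x y :: "'a::linordered_semidom"
  assumes "0 \<le> x" "0 \<le> y" "0 < n"
  shows "x^n < y^n \<longleftrightarrow> x < y"
  using assms by (meson power_less_imp_less_base power_strict_mono)

lemma gam_has_real_derivative:
  assumes "0 \<le> u"
  shows "(gam k a \<theta> has_real_derivative
           -1 + ((1 + u^k) - (u - a*\<theta>) * (real k * u^(k-1))) / (1 + u^k)^2) (at u)"
proof -
  have "1 + u^k \<noteq> 0"
    using assms by (smt (verit) zero_le_power)
  then show ?thesis
    unfolding gam_def[abs_def]
    by (auto intro!: derivative_eq_intros simp: field_simps power2_eq_square)
qed

lemma gam_maps_interval:
  assumes "0 \<le> a*\<theta>" "u \<in> {a*\<theta>..a}"
  shows "gam k a \<theta> u \<in> {a*\<theta>..a}"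
proof -
  have u: "a*\<theta> \<le> u" "u \<le> a" and den: "1 \<le> 1 + u^k"
    using assms by auto
  have "0 \<le> (u - a*\<theta>) / (1 + u^k)"
    using u den by simp
  moreover have "(u - a*\<theta>) / (1 + u^k) \<le> u - a*\<theta>"
    using u den by (simp add: divide_le_eq) (smt (verit) mult_left_mono mult_cancel_left1)
  ultimately show ?thesis
    using u unfolding gam_def by (auto simp: algebra_simps)
qed

lemma gam_minus_id_strict_antimono:
  assumes "0 \<le> a*\<theta>" "a*\<theta> \<le> x" "x < y"
  shows "gam k a \<theta> y - y < gam k a \<theta> x - x"
proof -
  have den: "1 \<le> 1 + x^k" "1 + x^k \<le> 1 + y^k"
    using assms by (auto simp: power_mono)
  have "(y - a*\<theta>) / (1 + y^k) \<le> (y - a*\<theta>) / (1 + x^k)"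
    by (intro divide_left_mono mult_pos_pos) (use den assms in linarith)+
  also have "\<dots> = (x - a*\<theta>) / (1 + x^k) + (y - x) / (1 + x^k)"
    by (simp add: diff_divide_distrib)
  also have "(y - x) / (1 + x^k) \<le> y - x"
    using den assms by (simp add: divide_le_eq)
  finally show ?thesis
    using assms(3) unfolding gam_def by linarith
qed

lemma gam_unique_fixed_point:
  assumes "0 < a*\<theta>" "a*\<theta> < a"
  shows "\<exists>!\<xi>. \<xi> \<in> {a*\<theta><..<a} \<and> gam k a \<theta> \<xi> = \<xi>"
proof -
  define g where "g u = gam k a \<theta> u - u" for u
  have g_left: "g (a*\<theta>) > 0"
    using assms unfolding g_def gam_def by (simp add: algebra_simps)
  have "(a - a*\<theta>) * 1 < (a - a*\<theta>) * (1 + a^k)"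
    using assms by (intro mult_strict_left_mono) auto
  then have "(a - a*\<theta>) / (1 + a^k) < a - a*\<theta>"
    using assms by (simp add: pos_divide_less_eq add_pos_pos)
  then have g_right: "g a < 0"
    unfolding g_def gam_def by (simp add: algebra_simps)
  have "isCont g x" if "a*\<theta> \<le> x" for x
  proof -
    have "1 + x^k \<noteq> 0"
      using that assms by (smt (verit) zero_le_power)
    then show ?thesis
      unfolding g_def gam_def by (intro continuous_intros) auto
  qed
  then have "\<exists>\<xi>\<ge>a*\<theta>. \<xi> \<le> a \<and> g \<xi> = 0"
    using g_left g_right by (intro IVT2 less_imp_le[OF assms(2)]) auto
  then obtain \<xi> where \<xi>: "a*\<theta> \<le> \<xi>" "\<xi> \<le> a" "g \<xi> = 0"
    by blast
  have "\<xi> \<in> {a*\<theta><..<a}"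
    using \<xi> g_left g_right by (auto simp: less_le)
  moreover have "\<eta> = \<xi>" if "a*\<theta> < \<eta>" "g \<eta> = 0" for \<eta>
    using gam_minus_id_strict_antimono[of a \<theta> \<xi> \<eta> k]
          gam_minus_id_strict_antimono[of a \<theta> \<eta> \<xi> k] \<xi> that assms
    unfolding g_def by (cases \<eta> \<xi> rule: linorder_cases) auto
  ultimately show ?thesis
    using \<xi>(3) unfolding g_def by (intro ex1I[of _ \<xi>]) auto
qed

definition param_of_fixed_point :: "nat \<Rightarrow> real \<Rightarrow> real \<Rightarrow> real" where
  "param_of_fixed_point k \<theta> x = x * (1 + 2*x^k) / (1 + (1 + \<theta>)*x^k)"

lemma param_of_fixed_point_strict_mono:
  assumes "0 < x" "x < y" "\<theta> < 1" "0 < \<theta>" "0 < k"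
  shows "param_of_fixed_point k \<theta> x < param_of_fixed_point k \<theta> y"
proof -
  define q where "q t = (1 + 2 * t) / (1 + (1 + \<theta>) * t)" for t :: real
  have q_pos: "0 < q t" if "0 < t" for t
    using that assms unfolding q_def by (simp add: add_pos_pos)
  have q_mono: "q s \<le> q t" if "0 < s" "s < t" for s t
  proof -
    have "(1 + 2 * t) * (1 + (1 + \<theta>) * s) - (1 + 2 * s) * (1 + (1 + \<theta>) * t) = (1 - \<theta>)*(t - s)"
      by (simp add: algebra_simps)
    then have "(1 + 2 * s) * (1 + (1 + \<theta>) * t) \<le> (1 + 2 * t) * (1 + (1 + \<theta>) * s)"
      using that assms by (smt (verit) mult_nonneg_nonneg)
    moreover have "0 < 1 + (1 + \<theta>) * s" "0 < 1 + (1 + \<theta>) * t"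
      using that assms by (simp_all add: add_pos_pos)
    ultimately show ?thesis
      using that assms unfolding q_def by (simp add: divide_le_eq le_divide_eq mult.commute)
  qed
  have "x * q (x^k) < y * q (x^k)"
    using q_pos assms by simp
  also have "\<dots> \<le> y * q (y^k)"
    using q_mono[of "x^k" "y^k"] assms by (simp add: power_strict_mono)
  finally show ?thesis
    unfolding param_of_fixed_point_def q_def by simp
qed

lemma param_of_fixed_point_less_iff:
  assumes "0 < x" "0 < y" "\<theta> < 1" "0 < \<theta>" "0 < k"
  shows "param_of_fixed_point k \<theta> x < param_of_fixed_point k \<theta> y \<longleftrightarrow> x < y"
  using param_of_fixed_point_strict_mono[of x y \<theta> k] param_of_fixed_point_strict_mono[of y x \<theta> k] assms
  by (cases x y rule: linorder_cases) auto

lemma param_of_fixed_point_at_threshold: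
  assumes "x^k * (real k - 1 - (real k + 1)*\<theta>) = 1" "\<theta> < 1" "0 < k"
  shows "param_of_fixed_point k \<theta> x = x * ((real k + 1) / real k)"
proof -
  define c where "c = real k - 1 - (real k + 1)*\<theta>"
  have cx: "c * x^k = 1"
    using assms(1) unfolding c_def by (simp add: mult.commute)
  then have "c \<noteq> 0"
    by auto
  then have "param_of_fixed_point k \<theta> x = (c * (x * (1 + 2*x^k))) / (c * (1 + (1 + \<theta>)*x^k))"
    unfolding param_of_fixed_point_def by simp
  also have "c * (x * (1 + 2*x^k)) = x * (c + 2 * (c * x^k))"
    by (simp add: algebra_simps)
  also have "c * (1 + (1 + \<theta>)*x^k) = c + (1 + \<theta>) * (c * x^k)"
    by (simp add: algebra_simps)
  finally have "param_of_fixed_point k \<theta> x = x * (c + 2) / (c + 1 + \<theta>)"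
    unfolding cx by simp
  also have "\<dots> = x * ((real k + 1) * (1 - \<theta>)) / (real k * (1 - \<theta>))"
    unfolding c_def by (simp add: algebra_simps)
  finally show ?thesis
    using assms by simp
qed

lemma gam_fixed_point_eq:
  assumes "0 < \<xi>" "gam k a \<theta> \<xi> = \<xi>"
  shows "\<xi> - a*\<theta> = (2*\<xi> - a*(1 + \<theta>)) * (1 + \<xi>^k)"
proof -
  have "(\<xi> - a*\<theta>) / (1 + \<xi>^k) = 2*\<xi> - a*(1 + \<theta>)"
    using assms(2) unfolding gam_def by linarith
  moreover have "1 + \<xi>^k \<noteq> 0"
    using assms(1) by (smt (verit) zero_less_power)
  ultimately show ?thesis
    by (simp add: divide_eq_eq)
qed

lemma gam_fixed_point_param:
  assumes "0 < \<xi>" "0 < \<theta>" "gam k a \<theta> \<xi> = \<xi>"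
  shows "a = param_of_fixed_point k \<theta> \<xi>"
proof -
  have "0 < 1 + (1 + \<theta>)*\<xi>^k"
    using assms by (simp add: add_pos_pos)
  then show ?thesis
    using gam_fixed_point_eq[OF assms(1,3)] unfolding param_of_fixed_point_def
    by (simp add: eq_divide_eq algebra_simps)
qed

text \<open>Multiplying \<open>\<gamma>'(\<xi>) < -1\<close> by \<open>\<xi> (1 + (1 + \<theta>)\<xi>\<^sup>k) > 0\<close> turns the factor \<open>\<xi> - a\<theta>\<close>
  into \<open>\<xi> (1 - \<theta>) (1 + \<xi>\<^sup>k)\<close>, by the fixed point equation.\<close>

lemma deriv_gam_fixed_point_less_minus_one_iff:
  assumes "0 < \<xi>" "0 < \<theta>" "0 < k" "gam k a \<theta> \<xi> = \<xi>"
  shows "deriv (gam k a \<theta>) \<xi> < -1 \<longleftrightarrow> 1 < \<xi>^k * (real k - 1 - (real k + 1)*\<theta>)"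
proof -
  define s where "s = \<xi>^k"
  define D where "D = 1 + (1 + \<theta>) * s"
  define E where "E = (\<xi> - a*\<theta>) * (real k * \<xi>^(k-1))"
  have s_pos: "0 < s" and D_pos: "0 < D"
    using assms unfolding s_def D_def by (simp_all add: add_pos_pos)
  have aD: "a * D = \<xi> * (1 + 2 * s)"
    using gam_fixed_point_eq[OF assms(1,4)] unfolding D_def s_def by (simp add: algebra_simps)
  have "(\<xi> - a*\<theta>) * D = \<xi> * D - \<theta> * (a * D)"
    by (simp add: algebra_simps)
  also have "\<dots> = \<xi> * (1 - \<theta>) * (1 + s)"
    unfolding aD by (simp add: D_def algebra_simps)
  finally have scaled: "(\<xi> - a*\<theta>) * D = \<xi> * (1 - \<theta>) * (1 + s)" .
  have "\<xi> * \<xi>^(k-1) = s"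
    using assms(3) unfolding s_def by (simp add: power_eq_if)
  then have "\<xi> * E = (\<xi> - a*\<theta>) * real k * s"
    unfolding E_def by (simp add: mult_ac)
  then have DE: "\<xi> * D * E = \<xi> * (1 + s) * (real k * s * (1 - \<theta>))"
    using scaled by (metis mult.assoc mult.commute)
  have "deriv (gam k a \<theta>) \<xi> = -1 + ((1 + s) - E) / (1 + s)^2"
    unfolding s_def E_def using assms(1) by (intro DERIV_imp_deriv gam_has_real_derivative) simp
  then have "deriv (gam k a \<theta>) \<xi> < -1 \<longleftrightarrow> \<xi> * D * (1 + s) < \<xi> * D * E"
    using s_pos D_pos assms(1) by (simp add: divide_less_0_iff)
  also have "\<dots> \<longleftrightarrow> (\<xi> * (1 + s)) * D < (\<xi> * (1 + s)) * (real k * s * (1 - \<theta>))"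
    unfolding DE by (simp only: mult_ac)
  also have "\<dots> \<longleftrightarrow> D < real k * s * (1 - \<theta>)"
    using s_pos assms(1) by (simp add: mult_ac)
  finally show ?thesis
    unfolding D_def s_def by (simp add: algebra_simps)
qed

lemma deriv_gam_fixed_point_less_minus_one_iff_params:
  assumes "0 < a" "0 < \<xi>" "0 < \<theta>" "\<theta> < 1" "0 < k" "gam k a \<theta> \<xi> = \<xi>"
  shows "deriv (gam k a \<theta>) \<xi> < -1 \<longleftrightarrow>
           \<theta> < (real k - 1) / (real k + 1) \<and>
           a^k > 1 / (real k - 1 - (real k + 1)*\<theta>) * ((real k + 1) / real k)^k"
proof -
  define c where "c = real k - 1 - (real k + 1)*\<theta>"
  have crit: "deriv (gam k a \<theta>) \<xi> < -1 \<longleftrightarrow> 1 < \<xi>^k * c"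
    using deriv_gam_fixed_point_less_minus_one_iff[OF assms(2,3,5,6)] unfolding c_def .
  have c_pos_iff: "\<theta> < (real k - 1) / (real k + 1) \<longleftrightarrow> 0 < c"
    unfolding c_def by (simp add: less_divide_eq algebra_simps)
  show ?thesis
  proof (cases "0 < c")
    case False
    then have "\<not> 1 < \<xi>^k * c"
      using assms(2) by (smt (verit) mult_nonneg_nonpos zero_le_power)
    then show ?thesis
      using crit c_pos_iff False by simp
  next
    case True
    define x\<^sub>0 where "x\<^sub>0 = root k (1/c)"
    have x\<^sub>0_pos: "0 < x\<^sub>0" and x\<^sub>0_pow: "x\<^sub>0^k * c = 1"
      unfolding x\<^sub>0_def using True assms(5) by simp_all
    have param_x\<^sub>0: "param_of_fixed_point k \<theta> x\<^sub>0 = x\<^sub>0 * ((real k + 1) / real k)"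
      using x\<^sub>0_pow assms(4,5) unfolding c_def by (rule param_of_fixed_point_at_threshold)
    have "1 < \<xi>^k * c \<longleftrightarrow> x\<^sub>0^k < \<xi>^k"
      using x\<^sub>0_pow True by (metis mult_less_cancel_right_pos)
    also have "\<dots> \<longleftrightarrow> x\<^sub>0 < \<xi>"
      using x\<^sub>0_pos assms(2,5) by (intro power_less_power_iff_base) simp_all
    also have "\<dots> \<longleftrightarrow> param_of_fixed_point k \<theta> x\<^sub>0 < a"
      unfolding gam_fixed_point_param[OF assms(2,3,6)]
      using x\<^sub>0_pos assms by (intro param_of_fixed_point_less_iff[symmetric]) auto
    also have "\<dots> \<longleftrightarrow> (param_of_fixed_point k \<theta> x\<^sub>0)^k < a^k"
      using x\<^sub>0_pos assms(1,5) unfolding param_x\<^sub>0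
      by (intro power_less_power_iff_base[symmetric]) auto
    also have "(param_of_fixed_point k \<theta> x\<^sub>0)^k = 1/c * ((real k + 1) / real k)^k"
      unfolding param_x\<^sub>0 power_mult_distrib using x\<^sub>0_pow True by (simp add: eq_divide_eq)
    finally show ?thesis
      using crit c_pos_iff True unfolding c_def by blast
  qed
qed

theorem mainTheorem9:
  fixes k :: nat and a \<theta> lam :: real
  assumes "k \<ge> 2" and "a > 0" and "0 < \<theta>" and "\<theta> < 1" and "lam = a ^ k"
  shows "(\<forall>u\<in>{a * \<theta>..a}. gam k a \<theta> u \<in> {a * \<theta>..a})
    \<and> (\<exists>!\<xi>. \<xi> \<in> {a * \<theta><..<a} \<and> gam k a \<theta> \<xi> = \<xi>)
    \<and> (\<forall>\<xi>. \<xi> \<in> {a * \<theta><..<a} \<and> gam k a \<theta> \<xi> = \<xi> \<longrightarrow>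
        (deriv (gam k a \<theta>) \<xi> < -1 \<longleftrightarrow>
          (\<theta> < (real k - 1) / (real k + 1) \<and>
           lam > 1 / (real k - 1 - (real k + 1) * \<theta>) * ((real k + 1) / real k) ^ k)))"
proof (intro conjI ballI allI impI)
  have a\<theta>: "0 < a * \<theta>" "a * \<theta> < a"
    using assms by simp_all
  show "gam k a \<theta> u \<in> {a * \<theta>..a}" if "u \<in> {a * \<theta>..a}" for u
    using a\<theta> that by (intro gam_maps_interval) simp_all
  show "\<exists>!\<xi>. \<xi> \<in> {a * \<theta><..<a} \<and> gam k a \<theta> \<xi> = \<xi>"
    using a\<theta> by (rule gam_unique_fixed_point)
  fix \<xi>
  assume "\<xi> \<in> {a * \<theta><..<a} \<and> gam k a \<theta> \<xi> = \<xi>"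
  then have "0 < \<xi>" "gam k a \<theta> \<xi> = \<xi>"
    using a\<theta> by auto
  then show "deriv (gam k a \<theta>) \<xi> < -1 \<longleftrightarrow>
      \<theta> < (real k - 1) / (real k + 1) \<and>
      lam > 1 / (real k - 1 - (real k + 1) * \<theta>) * ((real k + 1) / real k) ^ k"
    unfolding assms(5) using assms(1-4)
    by (intro deriv_gam_fixed_point_less_minus_one_iff_params) simp_all
qed

end
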